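(* Let $\alpha$ be a positive rational number and $v\in\widetilde V$. If $\rho_\alpha(v)=\alpha+4$, then $\alpha$ is an integer.
   Context: For real $\alpha>0$ put $t=\alpha+2$, $u_0=0$, $u_1=1$, $u_{i+2}=tu_{i+1}-u_i$; $\rho_\alpha(0)=0$ and $\rho_\alpha(n)=1+\frac{u_{n-1}}{u_n+1}$ for $n\in\mathbb{N}$. $\widetilde V$ is the set of infinite nonincreasing sequences of nonnegative integers that are eventually $0$, and $\rho_\alpha(v)=\sum_i\rho_\alpha(v_i)$. *)

theory Defs
  imports Complex_Main
begin

fun useq :: "real \<Rightarrow> nat \<Rightarrow> real" where
  "useq \<alpha> 0 = 0"
| "useq \<alpha> (Suc 0) = 1"
| "useq \<alpha> (Suc (Suc i)) = (\<alpha> + 2) * useq \<alpha> (Suc i) - useq \<alpha> i"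

definition rho :: "real \<Rightarrow> nat \<Rightarrow> real" where
  "rho \<alpha> n = (if n = 0 then 0 else 1 + useq \<alpha> (n - 1) / (useq \<alpha> n + 1))"

definition Vtilde :: "(nat \<Rightarrow> nat) set" where
  "Vtilde = {v. (\<forall>i. v (Suc i) \<le> v i) \<and> (\<exists>N. \<forall>i\<ge>N. v i = 0)}"

text \<open>rho extended to sequences: the sum over all indices (only finitely many nonzero terms).\<close>
definition rho_seq :: "real \<Rightarrow> (nat \<Rightarrow> nat) \<Rightarrow> real" where
  "rho_seq \<alpha> v = (\<Sum>i. rho \<alpha> (v i))"

end

theory Submission
  imports Defs
begin

text \<open>Write \<open>\<alpha> = p/q\<close> in lowest terms with \<open>q > 1\<close>. Scaling the recurrence by \<open>q\<close> shows
  \<open>u\<^sub>n\<^sub>+\<^sub>1 = c\<^sub>n / q\<^sup>n\<close> with integers \<open>c\<^sub>n \<equiv> (p + 2q)\<^sup>n (mod q)\<close>, all coprime to \<open>q\<close>. Hence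
  \<open>\<rho>\<^sub>\<alpha>(m + 2) = 1 + q c\<^sub>m / (c\<^sub>m\<^sub>+\<^sub>1 + q\<^sup>m\<^sup>+\<^sup>1)\<close> is a fraction whose denominator is coprime
  to \<open>q\<close>, and so is every finite sum \<open>\<rho>\<^sub>\<alpha>(v)\<close>. But \<open>\<alpha> + 4 = (p + 4q)/q\<close> is not such a
  fraction.\<close>

lemma coprime_add_mult_left_iff:
  fixes a b c :: "'a :: semiring_gcd"
  shows "coprime (a + c * b) b \<longleftrightarrow> coprime a b"
  by (simp add: coprime_iff_gcd_eq_1 gcd.commute[of _ b] add.commute[of a] gcd_add_mult)

definition has_denom_coprime :: "int \<Rightarrow> real \<Rightarrow> bool" where
  "has_denom_coprime q x \<longleftrightarrow> (\<exists>a d. d \<noteq> 0 \<and> coprime d q \<and> x = of_int a / of_int d)"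

lemma has_denom_coprime_of_int: "has_denom_coprime q (of_int z)"
  unfolding has_denom_coprime_def by (rule exI[of _ z], rule exI[of _ 1]) simp

lemma has_denom_coprime_add:
  assumes "has_denom_coprime q x" and "has_denom_coprime q y"
  shows "has_denom_coprime q (x + y)"
proof -
  obtain a d where x: "d \<noteq> 0" "coprime d q" "x = of_int a / of_int d"
    using assms(1) unfolding has_denom_coprime_def by blast
  obtain b e where y: "e \<noteq> 0" "coprime e q" "y = of_int b / of_int e"
    using assms(2) unfolding has_denom_coprime_def by blast
  have "x + y = of_int (a * e + b * d) / of_int (d * e)"
    using x y by (simp add: field_simps)
  moreover have "d * e \<noteq> 0" and "coprime (d * e) q"
    using x y by simp_all
  ultimately show ?thesis
    unfolding has_denom_coprime_def by blast
qed

lemma has_denom_coprime_sum: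
  assumes "\<And>i. i \<in> A \<Longrightarrow> has_denom_coprime q (f i)"
  shows "has_denom_coprime q (\<Sum>i\<in>A. f i)"
  using assms
  by (induction A rule: infinite_finite_induct)
     (auto intro: has_denom_coprime_add has_denom_coprime_of_int[of _ 0, simplified])

lemma not_has_denom_coprime_frac:
  fixes p q :: int
  assumes "q > 1" and "coprime p q"
  shows "\<not> has_denom_coprime q (of_int p / of_int q)"
proof
  assume "has_denom_coprime q (of_int p / of_int q)"
  then obtain a d where d: "d \<noteq> 0" "coprime d q"
    and eq: "of_int p / of_int q = (of_int a / of_int d :: real)"
    unfolding has_denom_coprime_def by blast
  have "of_int (p * d) = (of_int (a * q) :: real)"
    using eq d(1) assms(1) by (simp add: field_simps)
  then have "q dvd p * d"
    by (simp only: of_int_eq_iff) simp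
  then have "q dvd p"
    using d(2) by (simp add: coprime_commute coprime_dvd_mult_left_iff)
  then have "is_unit q"
    using assms(2) by (meson coprime_common_divisor dvd_refl)
  then show False
    using assms(1) by simp
qed

fun useq_numer :: "int \<Rightarrow> int \<Rightarrow> nat \<Rightarrow> int" where
  "useq_numer p q 0 = 1"
| "useq_numer p q (Suc 0) = p + 2 * q"
| "useq_numer p q (Suc (Suc n)) =
     (p + 2 * q) * useq_numer p q (Suc n) - q\<^sup>2 * useq_numer p q n"

lemma useq_numer_coprime:
  assumes "coprime p q"
  shows "coprime (useq_numer p q n) q"
proof (induction n rule: induct_nat_012)
  case 1
  show ?case
    using coprime_add_mult_left_iff[of p 2 q] assms by simp
next
  case (ge2 n)
  have "coprime ((p + 2 * q) * useq_numer p q (Suc n)) q"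
    using coprime_add_mult_left_iff[of p 2 q] assms ge2 by simp
  then have "coprime ((p + 2 * q) * useq_numer p q (Suc n) + (- q * useq_numer p q n) * q) q"
    by (simp only: coprime_add_mult_left_iff)
  then show ?case
    by (simp add: power2_eq_square algebra_simps)
qed simp

lemma useq_Suc_eq_numer:
  fixes p q :: int
  assumes "q \<noteq> 0" and "\<alpha> = of_int p / of_int q"
  shows "useq \<alpha> (Suc n) = of_int (useq_numer p q n) / of_int q ^ n"
proof (induction n rule: induct_nat_012)
  case 1
  show ?case
    using assms by (simp add: field_simps)
next
  case (ge2 n)
  have "useq \<alpha> (Suc (Suc (Suc n))) = (\<alpha> + 2) * useq \<alpha> (Suc (Suc n)) - useq \<alpha> (Suc n)"
    by simp
  also have "\<dots> = (\<alpha> + 2) * (of_int (useq_numer p q (Suc n)) / of_int q ^ Suc n)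
      - of_int (useq_numer p q n) / of_int q ^ n"
    by (simp only: ge2)
  also have "\<dots> = of_int (useq_numer p q (Suc (Suc n))) / of_int q ^ Suc (Suc n)"
    using assms by (simp add: field_simps power2_eq_square)
  finally show ?case .
qed simp

lemma has_denom_coprime_rho:
  fixes p q :: int
  assumes "q > 1" and "coprime p q" and "\<alpha> = of_int p / of_int q"
  shows "has_denom_coprime q (rho \<alpha> n)"
proof -
  consider "n = 0" | "n = 1" | m where "n = Suc (Suc m)"
    by (metis One_nat_def not0_implies_Suc)
  then show ?thesis
  proof cases
    case 1
    then show ?thesis
      using has_denom_coprime_of_int[of q 0] by (simp add: rho_def)
  next
    case 2
    then show ?thesis
      using has_denom_coprime_of_int[of q 1] by (simp add: rho_def)
  next
    case 3
    define C where "C = useq_numer p q m"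
    define D where "D = useq_numer p q (Suc m) + q ^ m * q"
    have "coprime D q"
      unfolding D_def coprime_add_mult_left_iff using useq_numer_coprime assms(2) .
    moreover from this have "D \<noteq> 0"
      using assms(1) by auto
    ultimately have "has_denom_coprime q (of_int (q * C) / of_int D)"
      unfolding has_denom_coprime_def by blast
    moreover have "rho \<alpha> n = of_int 1 + of_int (q * C) / of_int D"
    proof -
      have u: "useq \<alpha> (Suc m) = of_int C / of_int q ^ m"
        "useq \<alpha> (Suc (Suc m)) = of_int (useq_numer p q (Suc m)) / of_int q ^ Suc m"
        using useq_Suc_eq_numer[of q \<alpha> p] assms unfolding C_def by (auto simp del: useq.simps)
      have "rho \<alpha> n = 1 + useq \<alpha> (Suc m) / (useq \<alpha> (Suc (Suc m)) + 1)"
        unfolding rho_def 3 by (simp del: useq.simps)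
      also have "\<dots> = 1 + (of_int C / of_int q ^ m)
          / (of_int (useq_numer p q (Suc m)) / of_int q ^ Suc m + 1)"
        by (simp only: u)
      also have "\<dots> = of_int 1 + of_int (q * C) / of_int D"
        using \<open>D \<noteq> 0\<close> assms(1) unfolding D_def
        by (simp add: field_simps)
      finally show ?thesis .
    qed
    ultimately show ?thesis
      using has_denom_coprime_add has_denom_coprime_of_int by metis
  qed
qed

lemma rho_seq_eq_sum:
  assumes "\<And>i. i \<ge> N \<Longrightarrow> v i = 0"
  shows "rho_seq \<alpha> v = (\<Sum>i<N. rho \<alpha> (v i))"
  unfolding rho_seq_def by (rule suminf_finite) (use assms in \<open>auto simp: rho_def\<close>)

theorem proposition4:
  fixes \<alpha> :: real and v :: "nat \<Rightarrow> nat"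
  assumes "\<alpha> \<in> \<rat>" and "\<alpha> > 0" and "v \<in> Vtilde"
    and "rho_seq \<alpha> v = \<alpha> + 4"
  shows "\<alpha> \<in> \<int>"
proof -
  obtain p q :: int where q: "q > 0" and pq: "coprime p q" and \<alpha>: "\<alpha> = of_int p / of_int q"
    using Rats_cases'[OF assms(1)] by blast
  show ?thesis
  proof (cases "q = 1")
    case True
    then show ?thesis
      using \<alpha> by simp
  next
    case False
    with q have "q > 1" by simp
    obtain N where "\<forall>i\<ge>N. v i = 0"
      using assms(3) unfolding Vtilde_def by blast
    then have "has_denom_coprime q (\<alpha> + 4)"
      using assms(4) rho_seq_eq_sum has_denom_coprime_sum has_denom_coprime_rho[OF \<open>q > 1\<close> pq \<alpha>]
      by metis
    then have "has_denom_coprime q (\<alpha> + 4 + of_int (- 4))"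
      by (rule has_denom_coprime_add[OF _ has_denom_coprime_of_int])
    then show ?thesis
      using not_has_denom_coprime_frac[OF \<open>q > 1\<close> pq] \<alpha> by simp
  qed
qed

end
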